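(* Let $A$ be an associative commutative algebra with unit over a field $K$ of characteristic different from $2$ and $3$, let $\partial\in\operatorname{Der}(A)$, and suppose that $a\partial\ne0$ for every nonzero $a\in A$. Let $A\partial=\{a\partial : a\in A\}$, a Lie algebra of derivations with $[a\partial,b\partial]=(a\partial(b)-b\partial(a))\partial$. For $\chi\in A^*$ define $\Phi(\chi):A\partial\times A\partial\to K$ by $\Phi(\chi)(a\partial,b\partial)=\chi(ab)$. Then each $\Phi(\chi)$ is a commutative $2$-cocycle on $A\partial$, and $\chi\mapsto\Phi(\chi)$ is an injective linear map $A^*\to Z^2_{comm}(A\partial)$.
   Context: $Z^2_{comm}(L)$ is the space of symmetric bilinear forms $\varphi:L\times L\to K$ with $\varphi([x,y],z)+\varphi([z,x],y)+\varphi([y,z],x)=0$ for all $x,y,z\in L$. *)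

theory Defs
  imports Complex_Main
begin

definition mulder :: "('a::comm_ring_1 \<Rightarrow> 'a) \<Rightarrow> 'a \<Rightarrow> ('a \<Rightarrow> 'a)" where
  "mulder D a = (\<lambda>x. a * D x)"

definition Ader :: "('a::comm_ring_1 \<Rightarrow> 'a) \<Rightarrow> ('a \<Rightarrow> 'a) set" where
  "Ader D = range (mulder D)"

definition dbracket :: "('a::ab_group_add \<Rightarrow> 'a) \<Rightarrow> ('a \<Rightarrow> 'a) \<Rightarrow> ('a \<Rightarrow> 'a)" where
  "dbracket u v = (\<lambda>x. u (v x) - v (u x))"

definition Z2comm :: "('k::field \<Rightarrow> 'a::ab_group_add \<Rightarrow> 'a) \<Rightarrow> ('a \<Rightarrow> 'a) set
    \<Rightarrow> (('a \<Rightarrow> 'a) \<Rightarrow> ('a \<Rightarrow> 'a) \<Rightarrow> 'k) set" where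
  "Z2comm scale L = {\<phi>.
     (\<forall>u\<in>L. \<forall>v\<in>L. \<phi> u v = \<phi> v u) \<and>
     (\<forall>u\<in>L. \<forall>v\<in>L. \<forall>w\<in>L. \<forall>c.
        \<phi> (\<lambda>x. u x + v x) w = \<phi> u w + \<phi> v w \<and>
        \<phi> (\<lambda>x. scale c (u x)) w = c * \<phi> u w) \<and>
     (\<forall>x\<in>L. \<forall>y\<in>L. \<forall>z\<in>L.
        \<phi> (dbracket x y) z + \<phi> (dbracket z x) y + \<phi> (dbracket y z) x = 0)}"

text \<open>\<Phi>(\<chi>)(a\<partial>, b\<partial>) = \<chi>(ab), using the (unique) representation of an element of A\<partial>.\<close>
definition Phi :: "('a::comm_ring_1 \<Rightarrow> 'a) \<Rightarrow> ('a \<Rightarrow> 'k::field)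
    \<Rightarrow> ('a \<Rightarrow> 'a) \<Rightarrow> ('a \<Rightarrow> 'a) \<Rightarrow> 'k" where
  "Phi D \<chi> u v = \<chi> ((THE a. u = mulder D a) * (THE b. v = mulder D b))"

end

theory Submission
  imports Defs
begin

text \<open>Since \<open>a \<mapsto> a\<partial>\<close> is injective, \<open>\<Phi>(\<chi>)\<close> is just \<open>(a, b) \<mapsto> \<chi>(ab)\<close>
  transported to \<open>A\<partial>\<close>. Symmetry and bilinearity are then inherited from the commutative
  multiplication of \<open>A\<close> and the linearity of \<open>\<chi>\<close>. Since
  \<open>[a\<partial>, b\<partial>] = (a\<partial>(b) - b\<partial>(a))\<partial>\<close>, the cocycle identity reduces to the vanishing of
  the cyclic sum \<open>(a\<partial>b - b\<partial>a)c + (c\<partial>a - a\<partial>c)b + (b\<partial>c - c\<partial>b)a\<close>, an identity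
  in any commutative ring. Finally \<open>\<Phi>(\<chi>)(1\<partial>, b\<partial>) = \<chi>(b)\<close> recovers \<open>\<chi>\<close>, so
  \<open>\<Phi>\<close> is injective.\<close>

lemma inj_mulder:
  assumes "\<And>a. a \<noteq> 0 \<Longrightarrow> mulder D a \<noteq> (\<lambda>x. 0)"
  shows "inj (mulder D)"
proof (rule injI)
  fix a b assume "mulder D a = mulder D b"
  then have "mulder D (a - b) = (\<lambda>x. 0)"
    by (auto simp: mulder_def fun_eq_iff algebra_simps)
  with assms[of "a - b"] show "a = b" by auto
qed

lemma Phi_mulder:
  assumes "inj (mulder D)"
  shows "Phi D \<chi> (mulder D a) (mulder D b) = \<chi> (a * b)"
  by (simp add: Phi_def inj_eq[OF assms])

lemma Phi_add: "Phi D (\<lambda>x. \<chi>1 x + \<chi>2 x) u v = Phi D \<chi>1 u v + Phi D \<chi>2 u v"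
  by (simp add: Phi_def)

lemma Phi_cmult: "Phi D (\<lambda>x. c * \<chi> x) u v = c * Phi D \<chi> u v"
  by (simp add: Phi_def)

lemma mulder_add: "(\<lambda>x. mulder D a x + mulder D b x) = mulder D (a + b)"
  by (simp add: mulder_def algebra_simps)

lemma mulder_scale:
  assumes "\<And>a b. scale c (a * b) = scale c a * b"
  shows "(\<lambda>x. scale c (mulder D a x)) = mulder D (scale c a)"
  by (simp add: mulder_def assms)

lemma dbracket_mulder:
  assumes "\<And>a b. D (a * b) = D a * b + a * D b"
  shows "dbracket (mulder D a) (mulder D b) = mulder D (a * D b - b * D a)"
  by (simp add: dbracket_def mulder_def assms algebra_simps)

lemma Phi_in_Z2comm:
  fixes scale :: "'k::field \<Rightarrow> 'a::comm_ring_1 \<Rightarrow> 'a" and \<chi> :: "'a \<Rightarrow> 'k"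
  assumes \<chi>: "Vector_Spaces.linear scale (*) \<chi>"
    and scale_mult: "\<And>c a b. scale c (a * b) = scale c a * b"
    and leibniz: "\<And>a b. D (a * b) = D a * b + a * D b"
    and inj: "inj (mulder D)"
  shows "Phi D \<chi> \<in> Z2comm scale (Ader D)"
proof -
  interpret Vector_Spaces.linear scale "(*)" \<chi> by (rule \<chi>)
  show ?thesis
    unfolding Z2comm_def Ader_def
  proof (intro CollectI conjI ballI allI; elim rangeE)
    fix a b u v assume "u = mulder D a" "v = mulder D b"
    then show "Phi D \<chi> u v = Phi D \<chi> v u"
      by (simp add: Phi_mulder[OF inj] mult.commute)
  next
    fix a b e c u v w assume uvw: "u = mulder D a" "v = mulder D b" "w = mulder D e"
    show "Phi D \<chi> (\<lambda>x. u x + v x) w = Phi D \<chi> u w + Phi D \<chi> v w"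
      by (simp add: uvw mulder_add Phi_mulder[OF inj] distrib_right add)
    show "Phi D \<chi> (\<lambda>x. scale c (u x)) w = c * Phi D \<chi> u w"
      by (simp add: uvw mulder_scale[where scale = scale, OF scale_mult] Phi_mulder[OF inj]
          scale_mult[symmetric] scale)
  next
    fix a b e u v w assume uvw: "u = mulder D a" "v = mulder D b" "w = mulder D e"
    have cyclic_sum: "(a * D b - b * D a) * e + (e * D a - a * D e) * b + (b * D e - e * D b) * a = 0"
      by (simp add: algebra_simps)
    have "\<chi> ((a * D b - b * D a) * e) + \<chi> ((e * D a - a * D e) * b)
        + \<chi> ((b * D e - e * D b) * a) = 0"
      using arg_cong[OF cyclic_sum, of \<chi>]
      by (simp add: add zero)
    then show "Phi D \<chi> (dbracket u v) w + Phi D \<chi> (dbracket w u) v + Phi D \<chi> (dbracket v w) u = 0"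
      by (simp add: uvw dbracket_mulder[OF leibniz] Phi_mulder[OF inj])
  qed
qed

lemma Phi_eq_imp_eq:
  assumes "inj (mulder D)"
    and "\<forall>u\<in>Ader D. \<forall>v\<in>Ader D. Phi D \<chi>1 u v = Phi D \<chi>2 u v"
  shows "\<chi>1 = \<chi>2"
proof
  fix b
  have "Phi D \<chi>1 (mulder D 1) (mulder D b) = Phi D \<chi>2 (mulder D 1) (mulder D b)"
    using assms(2) by (simp add: Ader_def)
  then show "\<chi>1 b = \<chi>2 b"
    by (simp add: Phi_mulder[OF assms(1)])
qed

theorem lemma2p4:
  fixes scale :: "'k::field \<Rightarrow> 'a::comm_ring_1 \<Rightarrow> 'a" and D :: "'a \<Rightarrow> 'a"
  assumes alg: "vector_space scale"
    and alg_mult: "\<And>c a b. scale c (a * b) = scale c a * b"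
    and char2: "(2::'k) \<noteq> 0" and char3: "(3::'k) \<noteq> 0"
    and D_lin: "Vector_Spaces.linear scale scale D"
    and D_leibniz: "\<And>a b. D (a * b) = D a * b + a * D b"
    and nondeg: "\<And>a. a \<noteq> 0 \<Longrightarrow> mulder D a \<noteq> (\<lambda>x. 0)"
  shows "(\<forall>\<chi>. Vector_Spaces.linear scale (*) \<chi> \<longrightarrow> Phi D \<chi> \<in> Z2comm scale (Ader D))
    \<and> (\<forall>\<chi>1 \<chi>2. Vector_Spaces.linear scale (*) \<chi>1 \<longrightarrow> Vector_Spaces.linear scale (*) \<chi>2 \<longrightarrow>
         (\<forall>u\<in>Ader D. \<forall>v\<in>Ader D.
            Phi D (\<lambda>x. \<chi>1 x + \<chi>2 x) u v = Phi D \<chi>1 u v + Phi D \<chi>2 u v))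
    \<and> (\<forall>\<chi> c. Vector_Spaces.linear scale (*) \<chi> \<longrightarrow>
         (\<forall>u\<in>Ader D. \<forall>v\<in>Ader D. Phi D (\<lambda>x. c * \<chi> x) u v = c * Phi D \<chi> u v))
    \<and> (\<forall>\<chi>1 \<chi>2. Vector_Spaces.linear scale (*) \<chi>1 \<longrightarrow> Vector_Spaces.linear scale (*) \<chi>2 \<longrightarrow>
         (\<forall>u\<in>Ader D. \<forall>v\<in>Ader D. Phi D \<chi>1 u v = Phi D \<chi>2 u v) \<longrightarrow> \<chi>1 = \<chi>2)"
proof -
  have inj: "inj (mulder D)"
    using nondeg by (rule inj_mulder)
  show ?thesis
    using Phi_in_Z2comm[where scale = scale, OF _ alg_mult D_leibniz inj] Phi_eq_imp_eq[OF inj]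
    by (auto simp: Phi_add Phi_cmult)
qed

end
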